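(* Let $t$ and $i$ be integers with $t \geq 1$, $0 \leq i < t$ and $t > 16i^{2} - i$. Let $H$ be a Hadamard matrix of order $4t+4i$, and let $M$ be the $(4t+4i) \times 4t$ matrix obtained from $H$ by deleting any $4i$ of its columns. Let $r_1, \dots, r_{4t+4i}$ be the rows of $M$, put $r_{4t+4i+j} = -r_j$ for $1 \leq j \leq 4t+4i$, and let $C_M = \{ \tfrac{1}{2}(r_j + \underline{1}) : 1 \leq j \leq 8t+8i\} \subseteq \{0,1\}^{4t}$, where $\underline{1}$ is the all-ones vector of length $4t$. Then the binary code $C_M$ is maximal: for every $v \in \{0,1\}^{4t} \setminus C_M$, the code $C_M \cup \{v\}$ has strictly smaller minimum distance than $C_M$.
   Context: A Hadamard matrix of order $n$ is an $n \times n$ matrix $H$ with entries in $\{\pm 1\}$ satisfying $HH^{\top} = nI_n$. A binary code of length $m$ is a subset of $\{0,1\}^m$; its minimum distance is the minimum Hamming distance between two distinct codewords. A code is called maximal if including any additional word as a codeword necessarily decreases the minimum distance. *)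

theory Defs
  imports Main
begin

(* An n x n matrix is represented as a function nat => nat => int, indices < n. *)
definition hadamard :: "nat \<Rightarrow> (nat \<Rightarrow> nat \<Rightarrow> int) \<Rightarrow> bool" where
  "hadamard n H \<longleftrightarrow>
     (\<forall>a<n. \<forall>b<n. H a b = 1 \<or> H a b = -1) \<and>
     (\<forall>a<n. \<forall>b<n. (\<Sum>k<n. H a k * H b k) = (if a = b then int n else 0))"

definition binwords :: "nat \<Rightarrow> nat list set" where
  "binwords m = {w. length w = m \<and> set w \<subseteq> {0, 1}}"

definition hamming :: "nat list \<Rightarrow> nat list \<Rightarrow> nat" where
  "hamming x y = card {k. k < length x \<and> x ! k \<noteq> y ! k}"

definition min_dist :: "nat list set \<Rightarrow> nat" where
  "min_dist C = Min {hamming x y | x y. x \<in> C \<and> y \<in> C \<and> x \<noteq> y}"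

(* Code C_M: M has rows r_j (j < n), entries M j k = H j (c k) for k < m.
   Codewords (r + 1)/2 for rows r_j and -r_j. *)
definition code_of :: "nat \<Rightarrow> nat \<Rightarrow> (nat \<Rightarrow> nat \<Rightarrow> int) \<Rightarrow> (nat \<Rightarrow> nat) \<Rightarrow> nat list set" where
  "code_of n m H c =
     {map (\<lambda>k. nat ((s * H j (c k) + 1) div 2)) [0..<m] | j s. j < n \<and> s \<in> {1, -1}}"

end

theory Submission imports Defs "Jordan_Normal_Form.Determinant" begin

text \<open>Write \<open>d = N - m\<close> for the number of deleted columns. Codewords correspond to signed
  restricted rows \<open>\<pm>r\<close>, and twice a Hamming distance equals \<open>m\<close> minus the inner product of the
  corresponding \<open>\<pm>1\<close>-vectors. Two distinct full rows are orthogonal, so their restrictions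
  have inner product of absolute value at most \<open>d\<close>; hence every distance in the code is at
  least \<open>(m - d)/2\<close>. Conversely, since the columns of \<open>H\<close> are orthogonal as well, the squared
  inner products of any \<open>\<pm>1\<close>-vector \<open>x\<close> with the \<open>N\<close> restricted rows sum to \<open>N m\<close>, so one of
  them is at least \<open>m > d\<^sup>2\<close>. The corresponding signed row lies at distance less than
  \<open>(m - d)/2\<close> from \<open>x\<close>, so adding \<open>x\<close> to the code lowers its minimum distance.
  For \<open>m = 4t\<close>, \<open>d = 4i\<close> the condition \<open>d\<^sup>2 < m\<close> follows from \<open>t > 16 i\<^sup>2 - i\<close>.\<close>

definition pm_vector :: "nat \<Rightarrow> (nat \<Rightarrow> int) \<Rightarrow> bool" where
  "pm_vector m x \<longleftrightarrow> (\<forall>k<m. x k = 1 \<or> x k = -1)"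

definition sign_word :: "nat \<Rightarrow> (nat \<Rightarrow> int) \<Rightarrow> nat list" where
  "sign_word m x = map (\<lambda>k. nat ((x k + 1) div 2)) [0..<m]"

lemma hadamard_entry: "hadamard N H \<Longrightarrow> a < N \<Longrightarrow> b < N \<Longrightarrow> H a b = 1 \<or> H a b = -1"
  unfolding hadamard_def by blast

lemma hadamard_columns_orthogonal:
  assumes "hadamard N H" "a < N" "b < N"
  shows "(\<Sum>j<N. H j a * H j b) = (if a = b then int N else 0)"
proof -
  have N0: "N > 0" using assms by auto
  define A :: "rat mat" where "A = mat N N (\<lambda>(p,q). of_int (H p q))"
  define B :: "rat mat" where "B = mat N N (\<lambda>(p,q). of_int (H q p) / of_nat N)"
  have AB: "A * B = 1\<^sub>m N"
  proof (rule eq_matI)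
    fix p q assume "p < dim_row (1\<^sub>m N :: rat mat)" "q < dim_col (1\<^sub>m N :: rat mat)"
    hence pq: "p < N" "q < N" by auto
    have "(A * B) $$ (p,q) = (\<Sum>k<N. of_int (H p k) * (of_int (H q k) / of_nat N))"
      using pq unfolding A_def B_def by (simp add: scalar_prod_def lessThan_atLeast0)
    also have "\<dots> = of_int (\<Sum>k<N. H p k * H q k) / of_nat N"
      by (simp add: sum_divide_distrib)
    also have "\<dots> = (if p = q then 1 else 0)"
      using assms(1) pq N0 unfolding hadamard_def by auto
    finally show "(A * B) $$ (p,q) = 1\<^sub>m N $$ (p,q)" using pq by simp
  qed (auto simp: A_def B_def)
  have BA: "B * A = 1\<^sub>m N"
    by (rule mat_mult_left_right_inverse[OF _ _ AB]) (auto simp: A_def B_def)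
  have "(B * A) $$ (a,b) = (\<Sum>k<N. (of_int (H k a) / of_nat N) * of_int (H k b))"
    using assms unfolding A_def B_def by (simp add: scalar_prod_def lessThan_atLeast0)
  also have "\<dots> = of_int (\<Sum>k<N. H k a * H k b) / of_nat N"
    by (simp add: sum_divide_distrib)
  finally have "of_int (\<Sum>k<N. H k a * H k b) / (of_nat N :: rat) = (if a = b then 1 else 0)"
    using BA assms by simp
  then have "(of_int (\<Sum>k<N. H k a * H k b) :: rat) = of_int (if a = b then int N else 0)"
    using N0 by (simp add: divide_eq_eq split: if_splits del: of_int_sum)
  then show ?thesis by (simp only: of_int_eq_iff)
qed

lemma hamming_sign_word:
  assumes "pm_vector m x" "pm_vector m y"
  shows "2 * int (hamming (sign_word m x) (sign_word m y)) = int m - (\<Sum>k<m. x k * y k)"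
proof -
  have bit_eq: "nat ((a + 1) div 2) = nat ((b + 1) div 2) \<longleftrightarrow> a = b"
    if "a = 1 \<or> a = -1" "b = 1 \<or> b = -1" for a b :: int
    using that by auto
  have "hamming (sign_word m x) (sign_word m y) = card {k. k < m \<and> x k \<noteq> y k}"
    unfolding hamming_def sign_word_def
    by (rule arg_cong[where f = card]) (use assms bit_eq in \<open>auto simp: pm_vector_def\<close>)
  moreover have "(\<Sum>k<m. x k * y k) = (\<Sum>k<m. 1 - 2 * (if x k \<noteq> y k then 1 else 0))"
    by (rule sum.cong) (use assms in \<open>fastforce simp: pm_vector_def\<close>)+
  moreover have "(\<Sum>k<m. (if x k \<noteq> y k then 1 else 0::int)) = int (card {k. k < m \<and> x k \<noteq> y k})"
    by (simp add: sum.If_cases lessThan_def Collect_conj_eq Int_commute)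
  ultimately show ?thesis by (simp add: sum_subtractf sum_distrib_left[symmetric])
qed

lemma binword_eq_sign_word:
  assumes "v \<in> binwords m"
  obtains x where "pm_vector m x" "v = sign_word m x"
proof
  define x where "x k = 2 * int (v ! k) - 1" for k
  have v01: "v ! k = 0 \<or> v ! k = 1" if "k < m" for k
    using assms that unfolding binwords_def by (auto dest!: nth_mem)
  show "pm_vector m x" using v01 unfolding pm_vector_def x_def by fastforce
  show "v = sign_word m x"
    using assms v01 unfolding sign_word_def binwords_def x_def
    by (intro nth_equalityI) auto
qed

lemma code_of_eq_sign_words:
  "code_of N m H c = {sign_word m (\<lambda>k. s * H j (c k)) | j s. j < N \<and> s \<in> {1, -1}}"
  unfolding code_of_def sign_word_def by simp

lemma finite_code_of: "finite (code_of N m H c)"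
  unfolding code_of_eq_sign_words
  by (rule finite_subset[of _ "(\<lambda>(j, s). sign_word m (\<lambda>k. s * H j (c k))) ` ({..<N} \<times> {1, -1})"])
    auto

lemma pm_vector_signed_row:
  assumes "hadamard N H" "\<forall>k<m. c k < N" "j < N" "s \<in> {1, -1}"
  shows "pm_vector m (\<lambda>k. s * H j (c k))"
  using hadamard_entry[OF assms(1) assms(3)] assms(2,4) unfolding pm_vector_def by fastforce

lemma inj_on_lessThan_le:
  fixes c :: "nat \<Rightarrow> nat"
  assumes "inj_on c {..<m}" "\<forall>k<m. c k < N"
  shows "m \<le> N"
proof -
  have "c ` {..<m} \<subseteq> {..<N}" using assms(2) by auto
  from card_inj_on_le[OF assms(1) this] show ?thesis by simp
qed

lemma restricted_rows_inner_bound: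
  assumes H: "hadamard N H" and j: "j < N" "j' < N" "j \<noteq> j'"
    and inj: "inj_on c {..<m}" and cr: "\<forall>k<m. c k < N"
  shows "\<bar>\<Sum>k<m. H j (c k) * H j' (c k)\<bar> \<le> int N - int m"
proof -
  let ?f = "\<lambda>b. H j b * H j' b"
  let ?S = "c ` {..<m}"
  have sub: "?S \<subseteq> {..<N}" using cr by auto
  have cS: "card ?S = m" using inj by (simp add: card_image)
  have "sum ?f ?S + sum ?f ({..<N} - ?S) = sum ?f {..<N}"
    using sum.subset_diff[OF sub finite_lessThan, of ?f] by simp
  also have "\<dots> = 0" using H j unfolding hadamard_def by auto
  finally have split: "sum ?f ?S = - sum ?f ({..<N} - ?S)" by simp
  have "\<bar>sum ?f ({..<N} - ?S)\<bar> \<le> (\<Sum>b\<in>{..<N} - ?S. \<bar>?f b\<bar>)" by (rule sum_abs)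
  also have "\<dots> = (\<Sum>b\<in>{..<N} - ?S. 1)"
  proof (rule sum.cong)
    fix b assume "b \<in> {..<N} - ?S"
    then have "H j b = 1 \<or> H j b = -1" "H j' b = 1 \<or> H j' b = -1"
      using hadamard_entry[OF H] j by auto
    then show "\<bar>?f b\<bar> = 1" by auto
  qed simp
  also have "\<dots> = int N - int m"
    using sub cS inj_on_lessThan_le[OF inj cr] by (simp add: card_Diff_subset of_nat_diff)
  finally show ?thesis using inj split by (simp add: sum.reindex)
qed

lemma sum_squared_correlations:
  assumes H: "hadamard N H" and inj: "inj_on c {..<m}" and cr: "\<forall>k<m. c k < N"
    and x: "pm_vector m x"
  shows "(\<Sum>j<N. (\<Sum>k<m. x k * H j (c k))^2) = int N * int m"
proof -
  have "(\<Sum>j<N. (\<Sum>k<m. x k * H j (c k))^2) =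
        (\<Sum>j<N. \<Sum>k<m. \<Sum>k'<m. x k * x k' * (H j (c k) * H j (c k')))"
    by (simp add: power2_eq_square sum_product mult_ac)
  also have "\<dots> = (\<Sum>k<m. \<Sum>k'<m. \<Sum>j<N. x k * x k' * (H j (c k) * H j (c k')))"
    by (subst sum.swap) (simp only: sum.swap[where A = "{..<N}"])
  also have "\<dots> = (\<Sum>k<m. \<Sum>k'<m. x k * x k' * (if k = k' then int N else 0))"
    using hadamard_columns_orthogonal[OF H] cr inj
    by (intro sum.cong refl) (simp add: inj_on_def flip: sum_distrib_left)
  also have "\<dots> = (\<Sum>k<m. x k * x k * int N)"
    by (intro sum.cong refl) (simp add: if_distrib sum.delta cong: if_cong)
  also have "\<dots> = (\<Sum>k<m. int N)"
    using x by (intro sum.cong refl) (auto simp: pm_vector_def)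
  finally show ?thesis by simp
qed

lemma code_distance_lower_bound:
  assumes H: "hadamard N H" and inj: "inj_on c {..<m}" and cr: "\<forall>k<m. c k < N"
    and xy: "u \<in> code_of N m H c" "w \<in> code_of N m H c" "u \<noteq> w"
  shows "2 * int m - int N \<le> 2 * int (hamming u w)"
proof -
  obtain j s where j: "j < N" "s \<in> {1,-1::int}" and u: "u = sign_word m (\<lambda>k. s * H j (c k))"
    using xy(1) by (auto simp: code_of_eq_sign_words)
  obtain j' s' where j': "j' < N" "s' \<in> {1,-1::int}" and w: "w = sign_word m (\<lambda>k. s' * H j' (c k))"
    using xy(2) by (auto simp: code_of_eq_sign_words)
  let ?ip = "\<Sum>k<m. H j (c k) * H j' (c k)"
  have dist: "2 * int (hamming u w) = int m - s * s' * ?ip"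
    using hamming_sign_word[OF pm_vector_signed_row[OF H cr j] pm_vector_signed_row[OF H cr j']]
    unfolding u w by (simp add: sum_distrib_left mult_ac)
  show ?thesis
  proof (cases "j = j'")
    case True
    with xy(3) u w j j' have "s * s' = -1" by auto
    moreover have "?ip = int m"
    proof -
      have "?ip = (\<Sum>k<m. 1)"
        using True hadamard_entry[OF H j(1)] cr by (intro sum.cong) fastforce+
      then show ?thesis by simp
    qed
    ultimately show ?thesis using dist by simp
  next
    case False
    have "\<bar>s * s'\<bar> = 1" using j j' by auto
    then have "\<bar>s * s' * ?ip\<bar> \<le> int N - int m"
      using restricted_rows_inner_bound[OF H j(1) j'(1) False inj cr] by (simp add: abs_mult)
    then show ?thesis using dist by simp
  qed
qed

lemma exists_close_codeword:
  assumes H: "hadamard N H" and inj: "inj_on c {..<m}" and cr: "\<forall>k<m. c k < N"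
    and sq: "(N - m)^2 < m" and x: "pm_vector m x"
  obtains w where "w \<in> code_of N m H c" "2 * int (hamming (sign_word m x) w) < 2 * int m - int N"
proof -
  define P where "P j = (\<Sum>k<m. x k * H j (c k))" for j
  have N0: "0 < N" using cr sq by (cases m) auto
  have "\<exists>j<N. int m \<le> (P j)^2"
  proof (rule ccontr)
    assume "\<not> ?thesis"
    then have "(\<Sum>j<N. (P j)^2) < (\<Sum>j<N. int m)"
      using N0 by (intro sum_strict_mono) auto
    then show False using sum_squared_correlations[OF H inj cr x] unfolding P_def by simp
  qed
  then obtain j where j: "j < N" "int m \<le> (P j)^2" by blast
  have "int (N - m) < \<bar>P j\<bar>"
  proof (rule ccontr)
    assume "\<not> ?thesis"
    then have "\<bar>P j\<bar>^2 \<le> int (N - m)^2" by (intro power_mono) auto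
    moreover have "int (N - m)^2 < int m" using sq by (simp flip: of_nat_power)
    ultimately show False using j(2) by simp
  qed
  moreover have "m \<le> N" using inj cr by (rule inj_on_lessThan_le)
  ultimately have P_large: "int N - int m < \<bar>P j\<bar>" by (simp add: of_nat_diff)
  define s :: int where "s = (if P j \<ge> 0 then 1 else -1)"
  have s: "s \<in> {1,-1}" "s * P j = \<bar>P j\<bar>" unfolding s_def by auto
  show ?thesis
  proof
    show "sign_word m (\<lambda>k. s * H j (c k)) \<in> code_of N m H c"
      unfolding code_of_eq_sign_words using j(1) s(1) by blast
    have "(\<Sum>k<m. x k * (s * H j (c k))) = s * P j"
      unfolding P_def by (simp add: sum_distrib_left mult_ac)
    then have "2 * int (hamming (sign_word m x) (sign_word m (\<lambda>k. s * H j (c k)))) = int m - s * P j"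
      using hamming_sign_word[OF x pm_vector_signed_row[OF H cr j(1) s(1)]] by simp
    then show "2 * int (hamming (sign_word m x) (sign_word m (\<lambda>k. s * H j (c k))))
        < 2 * int m - int N"
      using s(2) P_large by simp
  qed
qed

lemma min_dist_insert_less:
  assumes "finite C" "u \<in> C" "u' \<in> C" "u \<noteq> u'" "v \<notin> C" "w \<in> C"
    and closer: "\<And>x y. x \<in> C \<Longrightarrow> y \<in> C \<Longrightarrow> x \<noteq> y \<Longrightarrow> hamming v w < hamming x y"
  shows "min_dist (insert v C) < min_dist C"
proof -
  have fin: "finite {hamming x y | x y. x \<in> X \<and> y \<in> X \<and> x \<noteq> y}" if "finite X" for X
    by (rule finite_subset[of _ "(\<lambda>(x, y). hamming x y) ` (X \<times> X)"]) (use that in auto)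
  have "min_dist (insert v C) \<le> hamming v w"
    unfolding min_dist_def by (rule Min_le) (use fin[of "insert v C"] assms in \<open>auto\<close>)
  also have "hamming v w < min_dist C"
    unfolding min_dist_def by (subst Min_gr_iff) (use fin assms in \<open>auto\<close>)
  finally show ?thesis .
qed

lemma code_of_antipodal_words:
  assumes H: "hadamard N H" and cr: "\<forall>k<m. c k < N" and m0: "0 < m"
  obtains u u' where "u \<in> code_of N m H c" "u' \<in> code_of N m H c" "u \<noteq> u'"
proof
  let ?row = "\<lambda>s. sign_word m (\<lambda>k. s * H 0 (c k))"
  have N0: "0 < N" using cr m0 by auto
  then have "H 0 (c 0) = 1 \<or> H 0 (c 0) = -1" using hadamard_entry[OF H] cr m0 by blast
  then have "?row 1 ! 0 \<noteq> ?row (-1) ! 0" using m0 unfolding sign_word_def by auto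
  then show "?row 1 \<noteq> ?row (-1)" by metis
  show "?row 1 \<in> code_of N m H c" "?row (-1) \<in> code_of N m H c"
    unfolding code_of_eq_sign_words using N0 by blast+
qed

theorem hadamard_column_deleted_code_maximal:
  assumes H: "hadamard N H" and inj: "inj_on c {..<m}" and cr: "\<forall>k<m. c k < N"
    and sq: "(N - m)^2 < m"
    and v: "v \<in> binwords m" "v \<notin> code_of N m H c"
  shows "min_dist (insert v (code_of N m H c)) < min_dist (code_of N m H c)"
proof -
  obtain x where x: "pm_vector m x" "v = sign_word m x"
    using binword_eq_sign_word[OF v(1)] .
  obtain w where w: "w \<in> code_of N m H c" "2 * int (hamming v w) < 2 * int m - int N"
    using exists_close_codeword[OF H inj cr sq x(1)] x(2) by blast
  have "0 < m" using sq by (cases m) auto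
  then obtain u u' where u: "u \<in> code_of N m H c" "u' \<in> code_of N m H c" "u \<noteq> u'"
    using code_of_antipodal_words[OF H cr] by blast
  have closer: "hamming v w < hamming x y"
    if "x \<in> code_of N m H c" "y \<in> code_of N m H c" "x \<noteq> y" for x y
    using code_distance_lower_bound[OF H inj cr that] w(2) by linarith
  show ?thesis
    by (rule min_dist_insert_less[OF finite_code_of u v(2) w(1) closer])
qed

theorem theorem3:
  fixes t i :: nat and H :: "nat \<Rightarrow> nat \<Rightarrow> int" and c :: "nat \<Rightarrow> nat"
  assumes "t \<ge> 1" and "i < t" and "int t > 16 * int i ^ 2 - int i"
    and "hadamard (4*t + 4*i) H"
    and "strict_mono_on {..<4*t} c" and "\<forall>k<4*t. c k < 4*t + 4*i"
  shows "\<forall>v \<in> binwords (4*t) - code_of (4*t + 4*i) (4*t) H c.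
           min_dist (insert v (code_of (4*t + 4*i) (4*t) H c))
             < min_dist (code_of (4*t + 4*i) (4*t) H c)"
proof
  fix v assume "v \<in> binwords (4*t) - code_of (4*t + 4*i) (4*t) H c"
  moreover have "inj_on c {..<4*t}" using assms(5) strict_mono_on_imp_inj_on by blast
  moreover have "(4*t + 4*i - 4*t)^2 < 4*t"
  proof -
    have "int i \<le> int i ^ 2" "0 \<le> int i ^ 2" by (cases i) (auto simp: power2_eq_square)
    then have "4 * int i ^ 2 < int t" using assms(3) by linarith
    then have "4 * i^2 < t" by (simp flip: of_nat_power)
    then show ?thesis by (simp add: power_mult_distrib)
  qed
  ultimately show "min_dist (insert v (code_of (4*t + 4*i) (4*t) H c))
      < min_dist (code_of (4*t + 4*i) (4*t) H c)"
    using hadamard_column_deleted_code_maximal[OF assms(4) _ assms(6)] by blast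
qed

end
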